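(* Let $D[X]$ be a directed sub-block and let $W\subsetneq X$ with $|W|\ge2$ contain a node $i$ that is reachable from all other nodes both in $D[W]$ and in $D[X]$. Then there is a node $k\in X\setminus W$ such that $W\cup\{k\}$ can be generated from $W$, and $i$ is reachable from all other nodes in $D[W\cup\{k\}]$.
   Context: $D=(V,A)$ is a directed graph. $\mathrm{IN}(X)$ is the set of nodes from which some member of $X$ is reachable by a directed path. For disjoint nonempty $X,Y,Z$, $f_E(X,Y,Z)=1$ iff $\mathrm{IN}(X)\cap\mathrm{IN}(Y)=\emptyset$ computed in $D-Z$; node $j$ is dynamically partitioning relative to $k$ and $Y$ iff $f_E(\{k\},Y,\{j\})=1$. A set $W_n$ of size $n$ can be generated from $W_m$ of size $m$, $2\le m<n$, iff there are sets $W_m\subset\dots\subset W_n$ with $W_{l+1}=W_l\cup\{k\}$, $k\in V\setminus W_l$, such that there is an arc from $k$ to some $j\in W_l$ that is not dynamically partitioning relative to $k$ and $W_l\setminus\{j\}$. $D[W]$ is the subgraph induced on $W$; reachability in $D[W]$ is via directed paths inside $D[W]$. A graph is biconnected if it has at least three vertices, is connected and remains connected after deleting any one vertex. $D[X]$ is a directed sub-block if some node of $X$ is reachable within $D[X]$ from all other nodes and the underlying undirected graph of $D[X]$ is biconnected. *)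

theory Defs
  imports Main
begin

definition digraph :: "'a set \<Rightarrow> ('a \<times> 'a) set \<Rightarrow> bool" where
  "digraph V A \<longleftrightarrow> finite V \<and> A \<subseteq> V \<times> V"

definition induced_arcs :: "('a \<times> 'a) set \<Rightarrow> 'a set \<Rightarrow> ('a \<times> 'a) set" where
  "induced_arcs A W = A \<inter> (W \<times> W)"

definition reach_in :: "('a \<times> 'a) set \<Rightarrow> 'a set \<Rightarrow> 'a \<Rightarrow> 'a \<Rightarrow> bool" where
  "reach_in A W u v \<longleftrightarrow> u \<in> W \<and> v \<in> W \<and> (u, v) \<in> (induced_arcs A W)\<^sup>*"

definition IN_minus :: "'a set \<Rightarrow> ('a \<times> 'a) set \<Rightarrow> 'a set \<Rightarrow> 'a set \<Rightarrow> 'a set" where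
  "IN_minus V A Z X = {v. \<exists>x\<in>X. reach_in A (V - Z) v x}"

definition f_E :: "'a set \<Rightarrow> ('a \<times> 'a) set \<Rightarrow> 'a set \<Rightarrow> 'a set \<Rightarrow> 'a set \<Rightarrow> bool" where
  "f_E V A X Y Z \<longleftrightarrow> IN_minus V A Z X \<inter> IN_minus V A Z Y = {}"

definition dyn_partitioning :: "'a set \<Rightarrow> ('a \<times> 'a) set \<Rightarrow> 'a \<Rightarrow> 'a \<Rightarrow> 'a set \<Rightarrow> bool" where
  "dyn_partitioning V A j k Y \<longleftrightarrow> f_E V A {k} Y {j}"

definition gen_step :: "'a set \<Rightarrow> ('a \<times> 'a) set \<Rightarrow> 'a set \<Rightarrow> 'a set \<Rightarrow> bool" where
  "gen_step V A W W' \<longleftrightarrow> (\<exists>k \<in> V - W. W' = insert k W \<and>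
      (\<exists>j \<in> W. (k, j) \<in> A \<and> \<not> dyn_partitioning V A j k (W - {j})))"

definition generated :: "'a set \<Rightarrow> ('a \<times> 'a) set \<Rightarrow> 'a set \<Rightarrow> 'a set \<Rightarrow> bool" where
  "generated V A Wm Wn \<longleftrightarrow> Wm \<subseteq> V \<and> finite Wm \<and> 2 \<le> card Wm \<and> card Wm < card Wn \<and>
      (gen_step V A)\<^sup>+\<^sup>+ Wm Wn"

text \<open>Undirected graphs on a vertex set S with a symmetric edge relation E.\<close>
definition ug_connected :: "'a set \<Rightarrow> ('a \<times> 'a) set \<Rightarrow> bool" where
  "ug_connected S E \<longleftrightarrow> (\<forall>u\<in>S. \<forall>v\<in>S. (u, v) \<in> (E \<inter> S \<times> S)\<^sup>*)"

definition biconnected :: "'a set \<Rightarrow> ('a \<times> 'a) set \<Rightarrow> bool" where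
  "biconnected S E \<longleftrightarrow> finite S \<and> 3 \<le> card S \<and> ug_connected S E \<and>
      (\<forall>v\<in>S. ug_connected (S - {v}) E)"

definition underlying :: "('a \<times> 'a) set \<Rightarrow> 'a set \<Rightarrow> ('a \<times> 'a) set" where
  "underlying A X = {(u, v). u \<noteq> v \<and> ((u, v) \<in> induced_arcs A X \<or> (v, u) \<in> induced_arcs A X)}"

definition directed_sub_block :: "'a set \<Rightarrow> ('a \<times> 'a) set \<Rightarrow> 'a set \<Rightarrow> bool" where
  "directed_sub_block V A X \<longleftrightarrow> X \<subseteq> V \<and>
     (\<exists>r\<in>X. \<forall>v\<in>X. reach_in A X v r) \<and> biconnected X (underlying A X)"

end

theory Submission
  imports Defs
begin

text \<open>
  Follow, from a node of X - W, a directed path inside D[X] until it first enters W; call the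
  node hit its first entry. We look for an arc k \<rightarrow> j from X - W into W such that some node of
  D[X] - j reaches both k and a member of W - {j}; adding k to W is then a generation step, and
  i stays reachable from k through j. If no such arc existed, every node of X - W would have a
  unique first entry, and along any undirected path of D[X] - j starting at a node with first
  entry j this first entry would stay equal to j. Since D[X] is biconnected, such a path reaches
  a second member of W, which has no first entry at all.
\<close>

lemma reach_in_refl: "u \<in> S \<Longrightarrow> reach_in A S u u"
  unfolding reach_in_def by simp

lemma reach_in_mono: "reach_in A S u v \<Longrightarrow> S \<subseteq> T \<Longrightarrow> reach_in A T u v"
proof -
  assume "reach_in A S u v" and "S \<subseteq> T"
  then have "induced_arcs A S \<subseteq> induced_arcs A T"
    unfolding induced_arcs_def by blast
  then show ?thesis
    using \<open>reach_in A S u v\<close> \<open>S \<subseteq> T\<close> rtrancl_mono unfolding reach_in_def by blast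
qed

lemma reach_in_arc_prepend:
  "(u, v) \<in> A \<Longrightarrow> u \<in> S \<Longrightarrow> reach_in A S v w \<Longrightarrow> reach_in A S u w"
  unfolding reach_in_def induced_arcs_def by (auto intro: converse_rtrancl_into_rtrancl)

lemma reach_in_arc_append:
  "reach_in A S u v \<Longrightarrow> (v, w) \<in> A \<Longrightarrow> w \<in> S \<Longrightarrow> reach_in A S u w"
  unfolding reach_in_def induced_arcs_def by (auto intro: rtrancl_into_rtrancl)

definition first_entry :: "('a \<times> 'a) set \<Rightarrow> 'a set \<Rightarrow> 'a set \<Rightarrow> 'a \<Rightarrow> 'a \<Rightarrow> bool" where
  "first_entry A X W x w \<longleftrightarrow> w \<in> W \<and> (\<exists>k. reach_in A (X - W) x k \<and> (k, w) \<in> A)"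

definition unseparated_entry :: "('a \<times> 'a) set \<Rightarrow> 'a set \<Rightarrow> 'a set \<Rightarrow> 'a \<Rightarrow> 'a \<Rightarrow> bool" where
  "unseparated_entry A X W k j \<longleftrightarrow> k \<in> X - W \<and> j \<in> W \<and> (k, j) \<in> A \<and>
     (\<exists>v. \<exists>w \<in> W - {j}. reach_in A (X - {j}) v k \<and> reach_in A (X - {j}) v w)"

lemma first_entry_source: "first_entry A X W x w \<Longrightarrow> x \<in> X - W"
  unfolding first_entry_def reach_in_def by blast

lemma first_entry_arc_prepend:
  "(x, y) \<in> A \<Longrightarrow> x \<in> X - W \<Longrightarrow> first_entry A X W y w \<Longrightarrow> first_entry A X W x w"
  unfolding first_entry_def by (blast intro: reach_in_arc_prepend)

lemma first_entry_exists:
  assumes "reach_in A X x w" and "w \<in> W" and "x \<notin> W"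
  shows "\<exists>w'. first_entry A X W x w'"
proof -
  have "(x, w) \<in> (induced_arcs A X)\<^sup>*" and "x \<in> X"
    using assms(1) unfolding reach_in_def by auto
  then show ?thesis using assms(3)
  proof (induction rule: converse_rtrancl_induct)
    case base
    then show ?case using \<open>w \<in> W\<close> by simp
  next
    case (step x y)
    then have xy: "(x, y) \<in> A" "y \<in> X" and x: "x \<in> X - W"
      unfolding induced_arcs_def by auto
    show ?case
    proof (cases "y \<in> W")
      case True
      then have "first_entry A X W x y"
        using xy(1) reach_in_refl[OF x] unfolding first_entry_def by blast
      then show ?thesis ..
    next
      case False
      then obtain w' where "first_entry A X W y w'" using step.IH[OF xy(2) False] by blast
      then show ?thesis using first_entry_arc_prepend[OF xy(1) x] by blast
    qed
  qed
qed

lemma unseparated_entry_of_first_entries: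
  assumes "W \<subseteq> X" and "first_entry A X W x w1" and "first_entry A X W x w2" and "w1 \<noteq> w2"
  shows "\<exists>k. unseparated_entry A X W k w1"
proof -
  obtain k1 where k1: "reach_in A (X - W) x k1" "(k1, w1) \<in> A" and "w1 \<in> W"
    using assms(2) unfolding first_entry_def by blast
  obtain k2 where k2: "reach_in A (X - W) x k2" "(k2, w2) \<in> A" and "w2 \<in> W"
    using assms(3) unfolding first_entry_def by blast
  have sub: "X - W \<subseteq> X - {w1}" using \<open>w1 \<in> W\<close> by blast
  have "reach_in A (X - {w1}) x w2"
    using reach_in_arc_append[OF reach_in_mono[OF k2(1) sub] k2(2)] assms(1,4) \<open>w2 \<in> W\<close> by blast
  moreover have "k1 \<in> X - W" using k1(1) unfolding reach_in_def by blast
  ultimately have "unseparated_entry A X W k1 w1"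
    unfolding unseparated_entry_def
    using k1 reach_in_mono[OF k1(1) sub] \<open>w1 \<in> W\<close> \<open>w2 \<in> W\<close> assms(4) by blast
  then show ?thesis ..
qed

lemma first_entry_propagate:
  assumes "W \<subseteq> X" and no_entry: "\<And>k j. \<not> unseparated_entry A X W k j"
    and exits: "\<And>x. x \<in> X - W \<Longrightarrow> \<exists>w. first_entry A X W x w"
    and y: "first_entry A X W y j" and yz: "(y, z) \<in> underlying A X" and "z \<noteq> j"
  shows "first_entry A X W z j"
proof -
  have unique: "w1 = w2" if "first_entry A X W x w1" "first_entry A X W x w2" for x w1 w2
    using unseparated_entry_of_first_entries[OF \<open>W \<subseteq> X\<close> that] no_entry by blast
  have yXW: "y \<in> X - W" using first_entry_source[OF y] .
  have zX: "z \<in> X" and arc: "(y, z) \<in> A \<or> (z, y) \<in> A"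
    using yz unfolding underlying_def induced_arcs_def by auto
  show ?thesis
  proof (cases "z \<in> W")
    case zW: True
    show ?thesis
    proof (cases "(y, z) \<in> A")
      case True
      then have "first_entry A X W y z"
        using zW reach_in_refl[OF yXW] unfolding first_entry_def by blast
      then show ?thesis using unique[OF y] \<open>z \<noteq> j\<close> by blast
    next
      case False
      \<comment> \<open>then z itself witnesses that the entry arc into j is unseparated\<close>
      obtain k where k: "reach_in A (X - W) y k" "(k, j) \<in> A" and "j \<in> W"
        using y unfolding first_entry_def by blast
      have sub: "X - W \<subseteq> X - {j}" using \<open>j \<in> W\<close> by blast
      have zy: "(z, y) \<in> A" using False arc by blast
      have zXj: "z \<in> X - {j}" using zX \<open>z \<noteq> j\<close> by blast
      have "reach_in A (X - {j}) z k"
        using reach_in_arc_prepend[OF zy zXj reach_in_mono[OF k(1) sub]] .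
      moreover have "k \<in> X - W" using k(1) unfolding reach_in_def by blast
      ultimately have "unseparated_entry A X W k j"
        unfolding unseparated_entry_def
        using k(2) \<open>j \<in> W\<close> zW zXj reach_in_refl[OF zXj] by blast
      then show ?thesis using no_entry by blast
    qed
  next
    case zXW: False
    then have z: "z \<in> X - W" using zX by blast
    show ?thesis
    proof (cases "(y, z) \<in> A")
      case True
      obtain w where w: "first_entry A X W z w" using exits[OF z] by blast
      have "w = j" using unique[OF first_entry_arc_prepend[OF True yXW w] y] .
      then show ?thesis using w by simp
    next
      case False
      then have "(z, y) \<in> A" using arc by blast
      then show ?thesis using first_entry_arc_prepend[OF _ z y] by blast
    qed
  qed
qed

lemma unseparated_entry_exists:
  assumes "W \<subset> X" and "2 \<le> card W"
    and connected: "\<And>j. j \<in> W \<Longrightarrow> ug_connected (X - {j}) (underlying A X)"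
    and reaches_W: "\<And>x. x \<in> X - W \<Longrightarrow> \<exists>w \<in> W. reach_in A X x w"
  shows "\<exists>k j. unseparated_entry A X W k j"
proof (rule ccontr)
  assume no_entry: "\<nexists>k j. unseparated_entry A X W k j"
  have exits: "\<exists>w. first_entry A X W x w" if x: "x \<in> X - W" for x
  proof -
    obtain w where "w \<in> W" and "reach_in A X x w" using reaches_W[OF x] by blast
    moreover have "x \<notin> W" using x by blast
    ultimately show ?thesis by (intro first_entry_exists)
  qed
  obtain k0 where k0: "k0 \<in> X - W" using assms(1) by blast
  then obtain j where j: "first_entry A X W k0 j" using exits by blast
  then have "j \<in> W" unfolding first_entry_def by blast
  obtain w where w: "w \<in> W" "w \<noteq> j"
  proof -
    have "\<not> W \<subseteq> {j}" using assms(2) card_mono[of "{j}" W] by auto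
    then show ?thesis using that by blast
  qed
  define U where "U = underlying A X \<inter> (X - {j}) \<times> (X - {j})"
  have "(k0, w) \<in> U\<^sup>*"
    using connected[OF \<open>j \<in> W\<close>] k0 w assms(1) \<open>j \<in> W\<close>
    unfolding ug_connected_def U_def by blast
  then have "first_entry A X W w j"
  proof (induction rule: rtrancl_induct)
    case base
    show ?case using j .
  next
    case (step y z)
    then show ?case
      using first_entry_propagate[OF _ _ exits] assms(1) no_entry unfolding U_def by blast
  qed
  then have "w \<in> X - W" by (rule first_entry_source)
  with w(1) show False by blast
qed

lemma not_dyn_partitioning_common_ancestor:
  assumes "reach_in A (V - {j}) v k" and "reach_in A (V - {j}) v w" and "w \<in> Y"
  shows "\<not> dyn_partitioning V A j k Y"
proof -
  have "v \<in> IN_minus V A {j} {k} \<inter> IN_minus V A {j} Y"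
    using assms unfolding IN_minus_def by blast
  then show ?thesis unfolding dyn_partitioning_def f_E_def by blast
qed

lemma gen_step_of_unseparated_entry:
  assumes "X \<subseteq> V" and "unseparated_entry A X W k j"
  shows "gen_step V A W (insert k W)"
proof -
  obtain v w where "w \<in> W - {j}" and vk: "reach_in A (X - {j}) v k" and vw: "reach_in A (X - {j}) v w"
    using assms(2) unfolding unseparated_entry_def by blast
  have sub: "X - {j} \<subseteq> V - {j}" using assms(1) by blast
  have "\<not> dyn_partitioning V A j k (W - {j})"
    using not_dyn_partitioning_common_ancestor[OF reach_in_mono[OF vk sub] reach_in_mono[OF vw sub]]
      \<open>w \<in> W - {j}\<close> .
  then show ?thesis
    using assms unfolding gen_step_def unseparated_entry_def by blast
qed

lemma generated_insert:
  assumes "W \<subseteq> V" and "finite W" and "2 \<le> card W" and "k \<notin> W"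
    and "gen_step V A W (insert k W)"
  shows "generated V A W (insert k W)"
  using assms unfolding generated_def by auto

lemma reach_in_all_insert_arc:
  assumes "\<forall>v \<in> W. reach_in A W v i" and "(k, j) \<in> A" and "j \<in> W"
  shows "\<forall>v \<in> insert k W. reach_in A (insert k W) v i"
proof
  fix v assume v: "v \<in> insert k W"
  have W_reach: "reach_in A (insert k W) u i" if "u \<in> W" for u
    using reach_in_mono[OF assms(1)[rule_format, OF that] subset_insertI] .
  then have "reach_in A (insert k W) k i"
    using reach_in_arc_prepend[OF assms(2) insertI1] assms(3) by blast
  with W_reach v show "reach_in A (insert k W) v i" by blast
qed

theorem mainTheorem10:
  fixes V :: "'a set" and A :: "('a \<times> 'a) set" and X W :: "'a set" and i :: 'a
  assumes "digraph V A"
    and "directed_sub_block V A X"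
    and "W \<subset> X"
    and "2 \<le> card W"
    and "i \<in> W"
    and "\<forall>v\<in>W. reach_in A W v i"
    and "\<forall>v\<in>X. reach_in A X v i"
  shows "\<exists>k \<in> X - W. generated V A W (insert k W) \<and>
           (\<forall>v \<in> insert k W. reach_in A (insert k W) v i)"
proof -
  have XV: "X \<subseteq> V" and "biconnected X (underlying A X)"
    using assms(2) unfolding directed_sub_block_def by auto
  then have "\<And>j. j \<in> W \<Longrightarrow> ug_connected (X - {j}) (underlying A X)"
    using assms(3) unfolding biconnected_def by blast
  moreover have "\<And>x. x \<in> X - W \<Longrightarrow> \<exists>w \<in> W. reach_in A X x w"
    using assms(5,7) by blast
  ultimately obtain k j where kj: "unseparated_entry A X W k j"
    using unseparated_entry_exists[OF assms(3,4)] by blast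
  then have k: "k \<in> X - W" and "j \<in> W" and "(k, j) \<in> A"
    unfolding unseparated_entry_def by auto
  have WV: "W \<subseteq> V" using assms(3) XV by blast
  then have "finite W"
    using assms(1) finite_subset unfolding digraph_def by blast
  then have "generated V A W (insert k W)"
    using generated_insert[OF WV _ assms(4) _ gen_step_of_unseparated_entry[OF XV kj]] k by blast
  moreover have "\<forall>v \<in> insert k W. reach_in A (insert k W) v i"
    using reach_in_all_insert_arc[OF assms(6) \<open>(k, j) \<in> A\<close> \<open>j \<in> W\<close>] .
  ultimately show ?thesis using k by blast
qed

end
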